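(* Let $B\ge1$ and let $X_B$ be a central chi-square random variable with $B$ degrees of freedom. For $\tau>0$ define $$h(\tau^2)=\frac{\tau}{\mathbb E\{(\sqrt{X_B}-\tau)\mathbb I_{X_B\ge\tau^2}\}},\qquad g(\tau^2)=\frac{\tau\,\mathbb E\{(\sqrt{X_B}-\tau)^2\mathbb I_{X_B\ge\tau^2}\}}{\mathbb E\{(\sqrt{X_B}-\tau)\mathbb I_{X_B\ge\tau^2}\}}.$$ Then for every $\tau\in(0,\infty)$, setting $\varepsilon=1/(1+h(\tau^2))$, we have $$M_B(\varepsilon\mid\mathrm{BlockSoft})=\frac{B+\tau^2+g(\tau^2)}{B\,(1+h(\tau^2))},$$ and $\tau$ is the minimax threshold, i.e. it attains the infimum over thresholds in the definition of $M_B(\varepsilon\mid\mathrm{BlockSoft})$.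
   Context: Block soft thresholding on $\mathbb R^B$: $\eta^{soft}(y;\tau)=(1-\tau/\|y\|_2)_+\,y$ for $\tau\ge0$. Let $\mathcal F_{\varepsilon,B}=\{\nu\in\mathcal P(\mathbb R^B):\nu(\{0\})\ge1-\varepsilon\}$. The minimax MSE is $$M_B(\varepsilon\mid\mathrm{BlockSoft})=\frac1B\inf_{\tau\ge0}\sup_{\nu\in\mathcal F_{\varepsilon,B}}\mathbb E_\nu\|\mathbf X-\eta^{soft}(\mathbf X+\mathbf Z;\tau)\|_2^2,$$ with $\mathbf X\sim\nu$ independent of $\mathbf Z\sim\mathsf N(0,I_{B\times B})$. *)

theory Defs
  imports "HOL-Probability.Probability"
begin

definition block_soft :: "real ^ 'n \<Rightarrow> real \<Rightarrow> real ^ 'n" where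
  "block_soft y \<tau> = max 0 (1 - \<tau> / norm y) *\<^sub>R y"

definition std_gauss :: "(real ^ 'n::finite) measure" where
  "std_gauss = density lborel
     (\<lambda>z. ennreal ((2 * pi) powr (- real CARD('n) / 2) * exp (- (norm z)\<^sup>2 / 2)))"

definition sparse_priors :: "real \<Rightarrow> (real ^ 'n::finite) measure set" where
  "sparse_priors \<epsilon> = {\<nu>. prob_space \<nu> \<and> sets \<nu> = sets borel \<and> measure \<nu> {0} \<ge> 1 - \<epsilon>}"

definition soft_risk :: "(real ^ 'n::finite) measure \<Rightarrow> real \<Rightarrow> ennreal" where
  "soft_risk \<nu> \<tau> = (\<integral>\<^sup>+ x. (\<integral>\<^sup>+ z. ennreal ((norm (x - block_soft (x + z) \<tau>))\<^sup>2)
                        \<partial>(std_gauss :: (real ^ 'n) measure)) \<partial>\<nu>)"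

text \<open>Minimax MSE M_B(eps | BlockSoft), B = CARD('n).\<close>
definition minimax_blocksoft :: "'n::finite itself \<Rightarrow> real \<Rightarrow> ennreal" where
  "minimax_blocksoft _ \<epsilon> =
     (INF \<tau>\<in>{0..}. SUP \<nu>\<in>(sparse_priors \<epsilon> :: (real ^ 'n) measure set). soft_risk \<nu> \<tau>)
       / ennreal (real CARD('n))"

definition chi_square_density :: "real \<Rightarrow> real \<Rightarrow> real" where
  "chi_square_density k x =
     (if x > 0 then x powr (k / 2 - 1) * exp (- x / 2) / (2 powr (k / 2) * Gamma (k / 2)) else 0)"

definition chi_square :: "real \<Rightarrow> real measure" where
  "chi_square k = density lborel (\<lambda>x. ennreal (chi_square_density k x))"

definition chi_m1 :: "real \<Rightarrow> real \<Rightarrow> real" where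
  "chi_m1 k \<tau> = (\<integral> x. (if x \<ge> \<tau>\<^sup>2 then sqrt x - \<tau> else 0) \<partial>chi_square k)"

definition chi_m2 :: "real \<Rightarrow> real \<Rightarrow> real" where
  "chi_m2 k \<tau> = (\<integral> x. (if x \<ge> \<tau>\<^sup>2 then (sqrt x - \<tau>)\<^sup>2 else 0) \<partial>chi_square k)"

definition h_fun :: "real \<Rightarrow> real \<Rightarrow> real" where
  "h_fun k \<tau> = \<tau> / chi_m1 k \<tau>"

definition g_fun :: "real \<Rightarrow> real \<Rightarrow> real" where
  "g_fun k \<tau> = \<tau> * chi_m2 k \<tau> / chi_m1 k \<tau>"

end

theory Submission
  imports Defs
begin

(*
  Write  r(x,t) = E ||x - eta(x+Z;t)||^2  for the risk at a fixed signal x and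
  B = CARD('n).  Since eta(y;t) = y - P_t y with P_t the projection onto the ball of radius t,
  firm nonexpansiveness of P_t and the symmetry Z ~ -Z give  r(x,t) <= B + t^2  for every x,
  while along x = n e (|e| = 1, n -> oo) Fatou's lemma shows that this bound is attained in
  the limit.  At x = 0 one has  r(0,t) = E (sqrt X_B - t)_+^2 = chi_m2 B t, because ||Z||^2 is
  chi-square distributed.  Hence the worst case over the sparse priors F_eps is
      sup_nu risk = (1 - eps) chi_m2 B t + eps (B + t^2)
  (upper bound: split nu into its atom at 0 and the rest; lower bound: two-point priors).
  Finally the tangent inequality  chi_m2 B t >= chi_m2 B tau - 2 (t - tau) chi_m1 B tau  shows
  that for eps = 1/(1 + h(tau)), i.e. (1 - eps) chi_m1 B tau = eps tau, this worst-case risk is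
  minimised at t = tau, and its value there is the closed form of the theorem.
*)


subsection \<open>The squared norm of a standard Gaussian vector is chi-square\<close>

lemma sq_norm_superlevel_eq_ball:
  fixes x :: real assumes "x < 0"
  shows "{z::'a::real_normed_vector. x < - (norm z)\<^sup>2} = ball 0 (sqrt (-x))"
proof -
  have "x < - (norm z)\<^sup>2 \<longleftrightarrow> norm z < sqrt (-x)" for z :: 'a
  proof -
    have "norm z < sqrt (-x) \<longleftrightarrow> sqrt ((norm z)\<^sup>2) < sqrt (-x)" by simp
    also have "\<dots> \<longleftrightarrow> (norm z)\<^sup>2 < -x" by (rule real_sqrt_less_iff)
    finally show ?thesis by linarith
  qed
  then show ?thesis unfolding ball_def by (simp add: set_eq_iff)
qed

lemma sqrt_power_eq_powr:
  fixes c :: real assumes "c > 0"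
  shows "sqrt c ^ n = c powr (real n / 2)"
proof -
  have "sqrt c ^ n = (c powr (1/2)) ^ n" using assms by (simp add: powr_half_sqrt)
  also have "\<dots> = c powr (1/2 * real n)" using assms
    by (auto simp: powr_realpow[symmetric] powr_powr)
  finally show ?thesis by simp
qed

lemma nn_integral_powr_Ico:
  fixes a c :: real assumes a: "a > -1" and c: "c > 0"
  shows "(\<integral>\<^sup>+ s. ennreal (indicator {0..<c} s * s powr a) \<partial>lborel) = ennreal (c powr (a+1) / (a+1))"
proof -
  have "(\<integral>\<^sup>+ s. ennreal (indicator {0..<c} s * s powr a) \<partial>lborel)
      = (\<integral>\<^sup>+ s. ennreal (indicator {0..c} s * s powr a) \<partial>lborel)"
    by (intro nn_integral_cong_AE AE_I[where N="{c}"]) (auto simp: indicator_def emeasure_lborel_countable)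
  also have "\<dots> = ennreal (c powr (a+1) / (a+1))"
    using nn_integral_has_integral_lebesgue[OF _ has_integral_powr_from_0[OF a, of c]] c by simp
  finally show ?thesis .
qed

text \<open>We work with \<open>-\<parallel>z\<parallel>\<^sup>2\<close> rather than \<open>\<parallel>z\<parallel>\<^sup>2\<close> because the measures of the upper tails
  \<open>{x<..}\<close>, which determine a measure on the line, are then finite (volumes of balls).\<close>

definition neg_sq_norm_dens :: "real \<Rightarrow> real \<Rightarrow> real" where
  "neg_sq_norm_dens B y = indicator {..0} y * (B/2 * unit_ball_vol B) * (-y) powr (B/2 - 1)"

lemma neg_sq_norm_dens_nonneg: "B \<ge> 0 \<Longrightarrow> neg_sq_norm_dens B y \<ge> 0"
  unfolding neg_sq_norm_dens_def by (auto simp: indicator_def)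

lemma neg_sq_norm_dens_measurable[measurable]: "neg_sq_norm_dens B \<in> borel_measurable borel"
  unfolding neg_sq_norm_dens_def by measurable

lemma distr_neg_sq_norm:
  "distr (lborel :: (real^'n::finite) measure) borel (\<lambda>z. - (norm z)\<^sup>2)
     = density lborel (\<lambda>y. ennreal (neg_sq_norm_dens (real CARD('n)) y))"
  (is "?M = ?N")
proof -
  define B where "B = real CARD('n)"
  have B: "B \<ge> 1" unfolding B_def by simp
  define V where "V x = (if x < 0 then ennreal (unit_ball_vol B * (-x) powr (B/2)) else 0)" for x
  have M: "emeasure ?M {x<..} = V x" for x
  proof -
    have "emeasure ?M {x<..} = emeasure lborel {z::real^'n. x < - (norm z)\<^sup>2}"
      by (subst emeasure_distr) (auto simp: vimage_def)
    also have "\<dots> = V x"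
    proof (cases "x < 0")
      case True
      then show ?thesis
        by (simp add: V_def sq_norm_superlevel_eq_ball emeasure_ball sqrt_power_eq_powr B_def)
    next
      case False
      then have "{z::real^'n. x < - (norm z)\<^sup>2} = {}"
        by (auto simp: not_less) (smt (verit) zero_le_power2)
      then show ?thesis using False by (simp add: V_def)
    qed
    finally show ?thesis .
  qed
  have N: "emeasure ?N {x<..} = V x" for x
  proof -
    have "emeasure ?N {x<..} = (\<integral>\<^sup>+ y. ennreal (neg_sq_norm_dens B y) * indicator {x<..} y \<partial>lborel)"
      by (subst emeasure_density) (auto simp: B_def)
    also have "\<dots> = (\<integral>\<^sup>+ s. ennreal (neg_sq_norm_dens B (-s)) * indicator {x<..} (-s) \<partial>lborel)"
      by (subst lborel_distr_uminus[symmetric], subst nn_integral_distr) auto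
    also have "\<dots> = V x"
    proof (cases "x < 0")
      case True
      have "(\<integral>\<^sup>+ s. ennreal (neg_sq_norm_dens B (-s)) * indicator {x<..} (-s) \<partial>lborel)
          = (\<integral>\<^sup>+ s. ennreal (B/2 * unit_ball_vol B) * ennreal (indicator {0..<(-x)} s * s powr (B/2-1)) \<partial>lborel)"
        using B by (intro nn_integral_cong)
          (auto simp: neg_sq_norm_dens_def indicator_def ennreal_mult'[symmetric])
      also have "\<dots> = ennreal (B/2 * unit_ball_vol B) * ennreal ((-x) powr (B/2) / (B/2))"
        using B True by (subst nn_integral_cmult) (auto simp: nn_integral_powr_Ico)
      also have "\<dots> = V x"
        using B True by (subst ennreal_mult'[symmetric]) (auto simp: V_def field_simps)
      finally show ?thesis .
    next
      case False
      then have "(\<lambda>s. ennreal (neg_sq_norm_dens B (-s)) * indicator {x<..} (-s)) = (\<lambda>_. 0)"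
        by (auto simp: neg_sq_norm_dens_def indicator_def fun_eq_iff)
      then show ?thesis using False by (simp add: V_def)
    qed
    finally show ?thesis .
  qed
  show ?thesis
    by (rule measure_eqI_lessThan) (auto simp: M N V_def)
qed

lemma polar_gauss_const_eq_chi_square_const:
  fixes B :: real assumes "B > 0"
  shows "B/2 * unit_ball_vol B * (2 * pi) powr (- B / 2) = 1 / (2 powr (B/2) * Gamma (B/2))"
proof -
  have nz: "B/2 \<notin> \<int>\<^sub>\<le>\<^sub>0" using assms by (auto dest!: nonpos_Ints_nonpos)
  have G: "Gamma (B/2 + 1) = B/2 * Gamma (B/2)" using Gamma_plus1[OF nz] .
  have Gp: "Gamma (B/2) > 0" using assms by (intro Gamma_real_pos) simp
  have pi: "pi powr (B/2) * pi powr (- (B/2)) = 1"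
    by (simp add: powr_add[symmetric])
  have "B/2 * unit_ball_vol B * (2 * pi) powr (- B / 2)
      = B/2 * (pi powr (B / 2) / (B/2 * Gamma (B/2))) * (2 powr (- (B/2)) * pi powr (- (B/2)))"
    unfolding unit_ball_vol_def G by (simp add: powr_mult)
  also have "\<dots> = (pi powr (B/2) * pi powr (- (B/2))) * 2 powr (- (B/2)) / Gamma (B/2)"
    using assms Gp by (simp add: field_simps)
  also have "\<dots> = 1 / (2 powr (B/2) * Gamma (B/2))"
    unfolding pi powr_minus_divide by simp
  finally show ?thesis .
qed

lemma chi_square_density_measurable[measurable]: "chi_square_density k \<in> borel_measurable borel"
  unfolding chi_square_density_def by measurable

lemma chi_square_sets[simp, measurable_cong]: "sets (chi_square k) = sets borel"
  unfolding chi_square_def by simp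

lemma chi_square_density_alt:
  "k > 0 \<Longrightarrow> chi_square_density k x
     = indicator {0<..} x * x powr (k/2-1) * exp (- x / 2) / (2 powr (k/2) * Gamma (k/2))"
  unfolding chi_square_density_def by (auto simp: indicator_def)

lemma nn_integral_chi_square:
  assumes [measurable]: "f \<in> borel_measurable borel"
  shows "(\<integral>\<^sup>+ x. f x \<partial>chi_square k) = (\<integral>\<^sup>+ x. ennreal (chi_square_density k x) * f x \<partial>lborel)"
  unfolding chi_square_def by (intro nn_integral_density) simp_all

lemma nn_integral_std_gauss_sq_norm:
  fixes f :: "real \<Rightarrow> ennreal"
  assumes [measurable]: "f \<in> borel_measurable borel"
  shows "(\<integral>\<^sup>+ z. f ((norm z)\<^sup>2) \<partial>(std_gauss :: (real^'n::finite) measure))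
       = (\<integral>\<^sup>+ x. f x \<partial>chi_square (real CARD('n)))"
proof -
  define B where "B = real CARD('n)"
  define K where "K = (2 * pi) powr (- B / 2)"
  have B: "B \<ge> 1" unfolding B_def by simp
  define \<phi> where "\<phi> y = ennreal (K * exp (y/2)) * f (-y)" for y
  have [measurable]: "\<phi> \<in> borel_measurable borel" unfolding \<phi>_def by measurable
  have "(\<integral>\<^sup>+ z. f ((norm z)\<^sup>2) \<partial>(std_gauss :: (real^'n) measure))
      = (\<integral>\<^sup>+ z. \<phi> (- (norm (z::real^'n))\<^sup>2) \<partial>lborel)"
    unfolding std_gauss_def K_def B_def \<phi>_def by (subst nn_integral_density) simp_all
  also have "\<dots> = (\<integral>\<^sup>+ y. \<phi> y \<partial>distr (lborel :: (real^'n) measure) borel (\<lambda>z. - (norm z)\<^sup>2))"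
    by (subst nn_integral_distr) auto
  also have "\<dots> = (\<integral>\<^sup>+ y. ennreal (neg_sq_norm_dens B y) * \<phi> y \<partial>lborel)"
    unfolding distr_neg_sq_norm B_def by (subst nn_integral_density) simp_all
  also have "\<dots> = (\<integral>\<^sup>+ s. ennreal (neg_sq_norm_dens B (-s)) * \<phi> (-s) \<partial>lborel)"
    by (subst lborel_distr_uminus[symmetric], subst nn_integral_distr) simp_all
  also have "\<dots> = (\<integral>\<^sup>+ s. ennreal (chi_square_density B s) * f s \<partial>lborel)"
  proof (intro nn_integral_cong)
    fix s :: real
    show "ennreal (neg_sq_norm_dens B (-s)) * \<phi> (-s) = ennreal (chi_square_density B s) * f s"
    proof (cases "s > 0")
      case True
      have C: "B/2 * unit_ball_vol B * K = 1 / (2 powr (B/2) * Gamma (B/2))"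
        using polar_gauss_const_eq_chi_square_const[of B] B unfolding K_def by simp
      have "neg_sq_norm_dens B (-s) * (K * exp (-s/2))
          = (B/2 * unit_ball_vol B * K) * (s powr (B/2-1) * exp(-s/2))"
        using True by (simp add: neg_sq_norm_dens_def indicator_def mult_ac)
      also have "\<dots> = chi_square_density B s"
        using True unfolding C by (simp add: chi_square_density_def)
      finally have "neg_sq_norm_dens B (-s) * (K * exp (-s/2)) = chi_square_density B s" .
      then show ?thesis using True B
        by (simp add: \<phi>_def mult.assoc[symmetric] ennreal_mult'[symmetric] neg_sq_norm_dens_nonneg)
    next
      case False
      then have "neg_sq_norm_dens B (-s) = 0"
        by (cases "s = 0") (auto simp: neg_sq_norm_dens_def indicator_def)
      then show ?thesis using False by (simp add: chi_square_density_def)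
    qed
  qed
  also have "\<dots> = (\<integral>\<^sup>+ x. f x \<partial>chi_square B)"
    by (rule nn_integral_chi_square[symmetric]) simp
  finally show ?thesis by (simp only: B_def)
qed

subsection \<open>Moments of the chi-square law and of the standard Gaussian\<close>

lemma nn_integral_gamma_kernel:
  fixes a :: real assumes a: "a > 0"
  shows "(\<integral>\<^sup>+ x. ennreal (indicator {0<..} x * x powr (a-1) * exp (- x / 2)) \<partial>lborel)
       = ennreal (2 powr a * Gamma a)"
proof -
  define g where "g x = ennreal (indicator {0<..} x * x powr (a-1) * exp (- x / 2))" for x :: real
  have [measurable]: "g \<in> borel_measurable borel" unfolding g_def by measurable
  have "(\<integral>\<^sup>+ x. g x \<partial>lborel) = ennreal \<bar>2\<bar> * (\<integral>\<^sup>+ x. g (0 + 2 * x) \<partial>lborel)"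
    by (rule nn_integral_real_affine) auto
  also have "(\<integral>\<^sup>+ x. g (0 + 2 * x) \<partial>lborel)
      = (\<integral>\<^sup>+ t. ennreal (2 powr (a-1)) * ennreal (indicator {0..} t * t powr (a - 1) / exp t) \<partial>lborel)"
  proof (intro nn_integral_cong)
    fix t :: real
    show "g (0 + 2 * t) = ennreal (2 powr (a-1)) * ennreal (indicator {0..} t * t powr (a - 1) / exp t)"
    proof (cases "t > 0")
      case True
      then show ?thesis
        by (simp add: g_def ennreal_mult'[symmetric] powr_mult exp_minus field_simps)
    next
      case False
      then show ?thesis by (cases "t = 0") (auto simp: g_def indicator_def)
    qed
  qed
  also have "\<dots> = ennreal (2 powr (a-1)) * ennreal (Gamma a)"
    by (subst nn_integral_cmult) (auto simp: Gamma_conv_nn_integral_real[OF a])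
  also have "ennreal \<bar>2\<bar> * (ennreal (2 powr (a-1)) * ennreal (Gamma a)) = ennreal (2 powr a * Gamma a)"
  proof -
    have e: "2 * (2 powr (a - 1) * Gamma a) = (2::real) powr a * Gamma a"
      by (simp add: powr_diff)
    have "ennreal (2 powr a * Gamma a) = ennreal 2 * ennreal (2 powr (a - 1) * Gamma a)"
      unfolding e[symmetric] using a by (intro ennreal_mult) auto
    then show ?thesis using a
      by (simp add: ennreal_mult'[symmetric] mult.assoc[symmetric])
  qed
  finally show ?thesis unfolding g_def .
qed

lemma chi_square_total:
  fixes k :: real assumes k: "k > 0"
  shows "(\<integral>\<^sup>+ x. 1 \<partial>chi_square k) = 1"
proof -
  have Gp: "Gamma (k/2) > 0" using k by simp
  have "(\<integral>\<^sup>+ x. 1 \<partial>chi_square k) = (\<integral>\<^sup>+ x. ennreal (chi_square_density k x) * 1 \<partial>lborel)"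
    by (rule nn_integral_chi_square) simp
  also have "\<dots> = (\<integral>\<^sup>+ x. ennreal (1 / (2 powr (k/2) * Gamma (k/2))) *
        ennreal (indicator {0<..} x * x powr (k/2-1) * exp (- x / 2)) \<partial>lborel)"
    using k Gp by (intro nn_integral_cong) (simp add: chi_square_density_alt ennreal_mult'[symmetric])
  also have "\<dots> = ennreal (1 / (2 powr (k/2) * Gamma (k/2))) * ennreal (2 powr (k/2) * Gamma (k/2))"
    using k nn_integral_gamma_kernel[of "k/2"] by (subst nn_integral_cmult) auto
  also have "\<dots> = 1" using Gp by (simp add: ennreal_mult'[symmetric])
  finally show ?thesis .
qed

lemma chi_square_mean:
  fixes k :: real assumes k: "k > 0"
  shows "(\<integral>\<^sup>+ x. ennreal x \<partial>chi_square k) = ennreal k"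
proof -
  have Gp: "Gamma (k/2) > 0" using k by simp
  have "k/2 \<notin> \<int>\<^sub>\<le>\<^sub>0" using k by (auto dest!: nonpos_Ints_nonpos)
  then have G: "Gamma (k/2 + 1) = k/2 * Gamma (k/2)" by (rule Gamma_plus1)
  have "(\<integral>\<^sup>+ x. ennreal x \<partial>chi_square k) = (\<integral>\<^sup>+ x. ennreal (chi_square_density k x) * ennreal x \<partial>lborel)"
    by (rule nn_integral_chi_square) simp
  also have "\<dots> = (\<integral>\<^sup>+ x. ennreal (1 / (2 powr (k/2) * Gamma (k/2))) *
        ennreal (indicator {0<..} x * x powr ((k/2+1)-1) * exp (- x / 2)) \<partial>lborel)"
  proof (intro nn_integral_cong)
    fix x :: real
    show "ennreal (chi_square_density k x) * ennreal x = ennreal (1 / (2 powr (k/2) * Gamma (k/2))) *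
        ennreal (indicator {0<..} x * x powr ((k/2+1)-1) * exp (- x / 2))"
    proof (cases "x > 0")
      case True
      have "x powr (k/2-1) * x = x powr ((k/2+1)-1)"
        using True by (simp add: powr_diff)
      then show ?thesis using True k Gp
        by (simp add: chi_square_density_alt ennreal_mult'[symmetric] field_simps)
    next
      case False
      then show ?thesis using k by (simp add: chi_square_density_alt)
    qed
  qed
  also have "\<dots> = ennreal (1 / (2 powr (k/2) * Gamma (k/2))) * ennreal (2 powr (k/2+1) * Gamma (k/2+1))"
    using k nn_integral_gamma_kernel[of "k/2+1"] by (subst nn_integral_cmult) auto
  also have "\<dots> = ennreal k"
  proof -
    have "(2::real) powr (k/2+1) = 2 * 2 powr (k/2)" by (simp add: powr_add)
    then have "1 / (2 powr (k/2) * Gamma (k/2)) * (2 powr (k/2+1) * Gamma (k/2+1)) = k"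
      using Gp unfolding G by (simp add: field_simps)
    then show ?thesis using Gp k by (simp add: ennreal_mult'[symmetric])
  qed
  finally show ?thesis .
qed

lemma std_gauss_sets[simp, measurable_cong]: "sets (std_gauss :: (real^'n::finite) measure) = sets borel"
  unfolding std_gauss_def by simp

lemma std_gauss_space[simp]: "space (std_gauss :: (real^'n::finite) measure) = UNIV"
  unfolding std_gauss_def by simp

lemma prob_space_std_gauss: "prob_space (std_gauss :: (real^'n::finite) measure)"
proof
  have "emeasure (std_gauss :: (real^'n) measure) (space std_gauss) = (\<integral>\<^sup>+ z. 1 \<partial>(std_gauss :: (real^'n) measure))"
    by (simp add: nn_integral_const)
  also have "\<dots> = (\<integral>\<^sup>+ x. 1 \<partial>chi_square (real CARD('n)))"
    using nn_integral_std_gauss_sq_norm[of "\<lambda>_. 1", where 'n='n] by simp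
  also have "\<dots> = 1" by (rule chi_square_total) simp
  finally show "emeasure (std_gauss :: (real^'n) measure) (space std_gauss) = 1" .
qed

lemma nn_integral_nonneg_comb:
  fixes f g :: "'a \<Rightarrow> real"
  assumes [measurable]: "f \<in> borel_measurable M" "g \<in> borel_measurable M"
    and "\<And>z. f z \<ge> 0" "\<And>z. g z \<ge> 0" "c \<ge> 0" "d \<ge> 0"
  shows "(\<integral>\<^sup>+ z. ennreal (c * f z + d * g z) \<partial>M)
       = ennreal c * (\<integral>\<^sup>+ z. ennreal (f z) \<partial>M) + ennreal d * (\<integral>\<^sup>+ z. ennreal (g z) \<partial>M)"
proof -
  have "(\<integral>\<^sup>+ z. ennreal (c * f z + d * g z) \<partial>M)
      = (\<integral>\<^sup>+ z. ennreal c * ennreal (f z) + ennreal d * ennreal (g z) \<partial>M)"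
    using assms by (intro nn_integral_cong)
      (simp add: ennreal_plus[symmetric] ennreal_mult[symmetric] del: ennreal_plus)
  also have "\<dots> = ennreal c * (\<integral>\<^sup>+ z. ennreal (f z) \<partial>M) + ennreal d * (\<integral>\<^sup>+ z. ennreal (g z) \<partial>M)"
    by (subst nn_integral_add) (auto simp: nn_integral_cmult)
  finally show ?thesis .
qed

lemma std_gauss_affine_sq_norm:
  fixes a b :: real assumes "a \<ge> 0" "b \<ge> 0"
  shows "(\<integral>\<^sup>+ z. ennreal (a * (norm z)\<^sup>2 + b) \<partial>(std_gauss :: (real^'n::finite) measure))
       = ennreal (a * real CARD('n) + b)"
proof -
  interpret prob_space "std_gauss :: (real^'n) measure" by (rule prob_space_std_gauss)
  have sq: "(\<integral>\<^sup>+ z. ennreal ((norm z)\<^sup>2) \<partial>(std_gauss :: (real^'n) measure)) = ennreal (real CARD('n))"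
    by (simp add: nn_integral_std_gauss_sq_norm[of ennreal] chi_square_mean)
  have one: "emeasure (std_gauss :: (real^'n) measure) UNIV = 1"
    using emeasure_space_1 by simp
  have "(\<integral>\<^sup>+ z. ennreal (a * (norm z)\<^sup>2 + b) \<partial>(std_gauss :: (real^'n) measure))
      = (\<integral>\<^sup>+ z. ennreal (a * (norm z)\<^sup>2 + b * 1) \<partial>(std_gauss :: (real^'n) measure))"
    by simp
  also have "\<dots> = ennreal a * ennreal (real CARD('n)) + ennreal b"
    by (subst nn_integral_nonneg_comb) (use assms in \<open>simp_all add: sq one\<close>)
  also have "\<dots> = ennreal (a * real CARD('n) + b)"
    using assms by (simp add: ennreal_plus[symmetric] ennreal_mult[symmetric] del: ennreal_plus)
  finally show ?thesis .
qed

lemma lborel_distr_uminus_vec: "distr (lborel :: (real^'n::finite) measure) borel uminus = lborel"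
  using lborel_affine[of "-1" "0::real^'n"] by (simp add: density_1)

lemma std_gauss_symmetric:
  assumes [measurable]: "f \<in> borel_measurable borel"
  shows "(\<integral>\<^sup>+ z. f (- z) \<partial>(std_gauss :: (real^'n::finite) measure)) = (\<integral>\<^sup>+ z. f z \<partial>std_gauss)"
proof -
  define \<gamma> where "\<gamma> z = ennreal ((2 * pi) powr (- real CARD('n) / 2) * exp (- (norm (z::real^'n))\<^sup>2 / 2))" for z
  have [measurable]: "\<gamma> \<in> borel_measurable borel" unfolding \<gamma>_def by measurable
  have "(\<integral>\<^sup>+ z. f (- z) \<partial>(std_gauss :: (real^'n) measure)) = (\<integral>\<^sup>+ z. \<gamma> z * f (- z) \<partial>lborel)"
    unfolding std_gauss_def \<gamma>_def by (subst nn_integral_density) simp_all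
  also have "\<dots> = (\<integral>\<^sup>+ z. (\<lambda>u. \<gamma> u * f u) (- z) \<partial>lborel)"
    by (simp add: \<gamma>_def)
  also have "\<dots> = (\<integral>\<^sup>+ z. \<gamma> z * f z \<partial>distr lborel borel uminus)"
    by (subst nn_integral_distr) simp_all
  also have "\<dots> = (\<integral>\<^sup>+ z. \<gamma> z * f z \<partial>lborel)" unfolding lborel_distr_uminus_vec ..
  also have "\<dots> = (\<integral>\<^sup>+ z. f z \<partial>(std_gauss :: (real^'n) measure))"
    unfolding std_gauss_def \<gamma>_def by (subst nn_integral_density) simp_all
  finally show ?thesis .
qed

text \<open>Halving an inequality or identity in \<open>ennreal\<close>; used after symmetrising an integral.\<close>

lemma ennreal_half_le:
  fixes a :: ennreal and c :: real
  assumes "a + a \<le> ennreal (2 * c)"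
  shows "a \<le> ennreal c"
proof (cases a)
  case (real r)
  then have "ennreal (2 * r) \<le> ennreal (2 * c)" using assms by (simp add: ennreal_plus[symmetric] del: ennreal_plus)
  then have "r \<le> c \<or> r = 0" using real by (auto simp: ennreal_le_iff2)
  then show ?thesis using real by (auto intro: ennreal_leI)
next
  case top
  then show ?thesis using assms by (simp add: top_unique)
qed
lemma ennreal_half_eq:
  fixes a :: ennreal and c :: real
  assumes "a + a = ennreal (2 * c)"
  shows "a = ennreal c"
proof (cases a)
  case (real r)
  then have eq: "ennreal (2 * r) = ennreal (2 * c)" using assms by (simp add: ennreal_plus[symmetric] del: ennreal_plus)
  show ?thesis
  proof (cases "c \<ge> 0")
    case True
    then show ?thesis using eq real by (simp add: ennreal_inj)
  next
    case False
    then have "r = 0" using eq real by (simp add: ennreal_neg)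
    then show ?thesis using False real by (simp add: ennreal_neg)
  qed
next
  case top
  then show ?thesis using assms by simp
qed

lemma std_gauss_shift_sq_norm:
  fixes a :: "real^'n::finite"
  shows "(\<integral>\<^sup>+ z. ennreal ((norm (a - z))\<^sup>2) \<partial>(std_gauss :: (real^'n) measure))
       = ennreal (real CARD('n) + (norm a)\<^sup>2)"
proof -
  define I where "I = (\<integral>\<^sup>+ z. ennreal ((norm (a - z))\<^sup>2) \<partial>(std_gauss :: (real^'n) measure))"
  have I2: "I = (\<integral>\<^sup>+ z. ennreal ((norm (a + z))\<^sup>2) \<partial>(std_gauss :: (real^'n) measure))"
    unfolding I_def using std_gauss_symmetric[of "\<lambda>z::real^'n. ennreal ((norm (a - z))\<^sup>2)"] by simp
  have parallelogram: "(norm (a - z))\<^sup>2 + (norm (a + z))\<^sup>2 = 2 * (norm z)\<^sup>2 + 2 * (norm a)\<^sup>2" for z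
    by (simp add: power2_norm_eq_inner inner_diff_left inner_diff_right inner_add_left
        inner_add_right inner_commute algebra_simps)
  have "I + I = (\<integral>\<^sup>+ z. ennreal ((norm (a - z))\<^sup>2) + ennreal ((norm (a + z))\<^sup>2) \<partial>(std_gauss :: (real^'n) measure))"
    by (subst nn_integral_add) (simp_all add: I_def[symmetric] I2[symmetric])
  also have "\<dots> = (\<integral>\<^sup>+ z. ennreal (2 * (norm z)\<^sup>2 + 2 * (norm a)\<^sup>2) \<partial>(std_gauss :: (real^'n) measure))"
  proof (intro nn_integral_cong)
    fix z :: "real^'n"
    show "ennreal ((norm (a - z))\<^sup>2) + ennreal ((norm (a + z))\<^sup>2) = ennreal (2 * (norm z)\<^sup>2 + 2 * (norm a)\<^sup>2)"
      unfolding parallelogram[symmetric] by (simp add: ennreal_plus[symmetric] del: ennreal_plus)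
  qed
  also have "\<dots> = ennreal (2 * (real CARD('n) + (norm a)\<^sup>2))"
    by (subst std_gauss_affine_sq_norm) (auto simp: algebra_simps)
  finally show ?thesis unfolding I_def by (rule ennreal_half_eq)
qed

subsection \<open>Block soft thresholding as the residual of a projection onto a ball\<close>

definition ball_proj :: "real \<Rightarrow> 'a::real_normed_vector \<Rightarrow> 'a" where
  "ball_proj t y = (if norm y \<le> t then y else (t / norm y) *\<^sub>R y)"

lemma block_soft_eq_residual:
  fixes y :: "real^'n::finite" assumes t: "t \<ge> 0"
  shows "block_soft y t = y - ball_proj t y"
proof (cases "norm y \<le> t")
  case True
  then have "max 0 (1 - t / norm y) = 0" if "y \<noteq> 0" using that by (auto simp: field_simps)
  then show ?thesis using True by (cases "y = 0") (simp_all add: block_soft_def ball_proj_def)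
next
  case False
  then have "norm y > 0" using t by linarith
  then have "max 0 (1 - t / norm y) = 1 - t / norm y" using False by (simp add: field_simps)
  then show ?thesis using False by (simp add: block_soft_def ball_proj_def algebra_simps)
qed

lemma ball_proj_norm: "t \<ge> 0 \<Longrightarrow> norm (ball_proj t y) \<le> t"
  by (auto simp: ball_proj_def)

lemma ball_proj_variational:
  fixes a q :: "'a::real_inner" assumes t: "t \<ge> 0" and q: "norm q \<le> t"
  shows "(a - ball_proj t a) \<bullet> (q - ball_proj t a) \<le> 0"
proof (cases "norm a \<le> t")
  case True then show ?thesis by (simp add: ball_proj_def)
next
  case False
  then have pos: "norm a > 0" using t by linarith
  define c where "c = 1 - t / norm a"
  have c: "c \<ge> 0" using False pos by (simp add: c_def field_simps)
  have "a - ball_proj t a = c *\<^sub>R a" using False by (simp add: ball_proj_def c_def algebra_simps)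
  moreover have "a \<bullet> (q - ball_proj t a) = a \<bullet> q - t * norm a"
    using False pos by (simp add: ball_proj_def inner_diff_right power2_norm_eq_inner[symmetric] power2_eq_square)
  moreover have "a \<bullet> q \<le> norm a * t"
    using Cauchy_Schwarz_ineq2[of a q] q pos by (smt (verit) mult_left_mono norm_ge_zero)
  ultimately show ?thesis using c by (simp add: mult_nonneg_nonpos mult.commute)
qed

lemma ball_proj_monotone:
  fixes a b :: "'a::real_inner" assumes t: "t \<ge> 0"
  shows "(a - b) \<bullet> (ball_proj t a - ball_proj t b) \<ge> 0"
proof -
  have a: "(a - ball_proj t a) \<bullet> (ball_proj t b - ball_proj t a) \<le> 0"
    by (rule ball_proj_variational[OF t ball_proj_norm[OF t]])
  have b: "(b - ball_proj t b) \<bullet> (ball_proj t a - ball_proj t b) \<le> 0"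
    by (rule ball_proj_variational[OF t ball_proj_norm[OF t]])
  have "(a - b) \<bullet> (ball_proj t a - ball_proj t b)
      = (ball_proj t a - ball_proj t b) \<bullet> (ball_proj t a - ball_proj t b)
        - (a - ball_proj t a) \<bullet> (ball_proj t b - ball_proj t a)
        - (b - ball_proj t b) \<bullet> (ball_proj t a - ball_proj t b)"
    by (simp add: inner_diff_left inner_diff_right inner_commute algebra_simps)
  then show ?thesis using a b by (smt (verit) inner_ge_zero)
qed

lemma block_soft_loss_eq:
  fixes x z :: "real^'n::finite" assumes t: "t \<ge> 0"
  shows "norm (x - block_soft (x + z) t) = norm (ball_proj t (x + z) - z)"
  unfolding block_soft_eq_residual[OF t] by (simp add: algebra_simps)

text \<open>Pairing the noise \<open>z\<close> with \<open>-z\<close>: if \<open>z \<bullet> (p\<^sub>1 - p\<^sub>2) \<ge> 0\<close> for points \<open>p\<^sub>i\<close> of the ball,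
  the two losses together are at most those of estimating by the worst point of the ball.\<close>

lemma paired_loss_bound:
  fixes z p1 p2 :: "'a::real_inner"
  assumes "z \<bullet> (p1 - p2) \<ge> 0" "norm p1 \<le> t" "norm p2 \<le> t"
  shows "(norm (p1 - z))\<^sup>2 + (norm (p2 + z))\<^sup>2 \<le> 2 * (norm z)\<^sup>2 + 2 * t\<^sup>2"
proof -
  have e: "(norm (p1 - z))\<^sup>2 + (norm (p2 + z))\<^sup>2
      = (norm p1)\<^sup>2 + (norm p2)\<^sup>2 + 2 * (norm z)\<^sup>2 - 2 * (z \<bullet> (p1 - p2))"
    by (simp add: power2_norm_eq_inner inner_diff_left inner_diff_right inner_add_left
        inner_add_right inner_commute algebra_simps)
  have "(norm p1)\<^sup>2 \<le> t\<^sup>2" "(norm p2)\<^sup>2 \<le> t\<^sup>2" using assms by (auto intro: power_mono)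
  then show ?thesis unfolding e using assms(1) by linarith
qed

lemma ball_proj_escape:
  fixes e z :: "'a::real_normed_vector" assumes e: "norm e = 1" and t: "t \<ge> 0"
  shows "(\<lambda>n. ball_proj t (real n *\<^sub>R e + z)) \<longlonglongrightarrow> t *\<^sub>R e"
proof -
  define w where "w n = e + (1 / real n) *\<^sub>R z" for n :: nat
  have w: "w \<longlonglongrightarrow> e"
    unfolding w_def
    using tendsto_add[OF tendsto_const tendsto_scaleR[OF lim_1_over_n tendsto_const], of e z]
    by simp
  have nw: "(\<lambda>n. norm (w n)) \<longlonglongrightarrow> 1" using tendsto_norm[OF w] e by simp
  have lim: "(\<lambda>n. t *\<^sub>R ((1 / norm (w n)) *\<^sub>R w n)) \<longlonglongrightarrow> t *\<^sub>R ((1 / 1) *\<^sub>R e)"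
    by (intro tendsto_intros w nw) simp
  have "eventually (\<lambda>n. t *\<^sub>R ((1 / norm (w n)) *\<^sub>R w n) = ball_proj t (real n *\<^sub>R e + z)) sequentially"
  proof -
    obtain N :: nat where N: "real N > norm z + t" using reals_Archimedean2 by blast
    show ?thesis unfolding eventually_sequentially
    proof (intro exI allI impI)
      fix n assume "N \<le> n"
      then have n: "real n > norm z + t" using N by linarith
      then have npos: "real n > 0" using t norm_ge_zero[of z] by linarith
      have y: "real n *\<^sub>R e + z = real n *\<^sub>R w n" using npos by (simp add: w_def scaleR_add_right)
      have "norm (real n *\<^sub>R e) - norm z \<le> norm (real n *\<^sub>R e + z)" by (rule norm_diff_ineq)
      then have big: "norm (real n *\<^sub>R e + z) > t" using n e npos by simp
      have nwpos: "norm (w n) > 0" using big y npos t by (auto simp: w_def)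
      have "ball_proj t (real n *\<^sub>R e + z) = (t / norm (real n *\<^sub>R w n)) *\<^sub>R (real n *\<^sub>R w n)"
        using big unfolding y ball_proj_def by simp
      also have "\<dots> = t *\<^sub>R ((1 / norm (w n)) *\<^sub>R w n)"
        using npos nwpos by (simp add: field_simps)
      finally show "t *\<^sub>R ((1 / norm (w n)) *\<^sub>R w n) = ball_proj t (real n *\<^sub>R e + z)" ..
    qed
  qed
  from Lim_transform_eventually[OF lim this] show ?thesis by simp
qed

subsection \<open>The risk at a fixed signal\<close>

definition point_risk :: "real^'n::finite \<Rightarrow> real \<Rightarrow> ennreal" where
  "point_risk x t = (\<integral>\<^sup>+ z. ennreal ((norm (x - block_soft (x + z) t))\<^sup>2) \<partial>(std_gauss :: (real^'n) measure))"

lemma soft_risk_eq_point_risk: "soft_risk \<nu> t = (\<integral>\<^sup>+ x. point_risk x t \<partial>\<nu>)"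
  unfolding soft_risk_def point_risk_def ..

lemma point_risk_measurable[measurable]:
  "(\<lambda>x. point_risk x t) \<in> borel_measurable (borel :: (real^'n::finite) measure)"
proof -
  interpret prob_space "std_gauss :: (real^'n) measure" by (rule prob_space_std_gauss)
  have "(\<lambda>(x, z). ennreal ((norm (x - block_soft (x + z) t))\<^sup>2))
      \<in> borel_measurable (borel \<Otimes>\<^sub>M (std_gauss :: (real^'n) measure))"
    unfolding block_soft_def by measurable
  then show ?thesis unfolding point_risk_def by (rule borel_measurable_nn_integral)
qed

text \<open>The risk at any signal is at most \<open>B + t\<^sup>2\<close>: averaging the losses for the noise
  values \<open>z\<close> and \<open>-z\<close> and using monotonicity of the projection reduces this to
  \<open>E (2\<parallel>Z\<parallel>\<^sup>2 + 2t\<^sup>2) = 2 (B + t\<^sup>2)\<close>.\<close>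

lemma point_risk_le:
  fixes x :: "real^'n::finite" assumes t: "t \<ge> 0"
  shows "point_risk x t \<le> ennreal (real CARD('n) + t\<^sup>2)"
proof (rule ennreal_half_le)
  define f where "f z = ennreal ((norm (ball_proj t (x + z) - z))\<^sup>2)" for z :: "real^'n"
  have [measurable]: "f \<in> borel_measurable borel" unfolding f_def ball_proj_def by measurable
  have R: "point_risk x t = (\<integral>\<^sup>+ z. f z \<partial>std_gauss)"
    unfolding point_risk_def f_def block_soft_loss_eq[OF t] ..
  have R': "point_risk x t = (\<integral>\<^sup>+ z. f (- z) \<partial>std_gauss)"
    unfolding R by (rule std_gauss_symmetric[symmetric]) simp
  have pair: "f z + f (- z) \<le> ennreal (2 * (norm z)\<^sup>2 + 2 * t\<^sup>2)" for z
  proof -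
    have "(2 *\<^sub>R z) \<bullet> (ball_proj t (x + z) - ball_proj t (x - z)) \<ge> 0"
      using ball_proj_monotone[OF t, of "x + z" "x - z"] by (simp add: algebra_simps scaleR_2)
    then have "z \<bullet> (ball_proj t (x + z) - ball_proj t (x - z)) \<ge> 0" by simp
    then have "(norm (ball_proj t (x + z) - z))\<^sup>2 + (norm (ball_proj t (x - z) + z))\<^sup>2
        \<le> 2 * (norm z)\<^sup>2 + 2 * t\<^sup>2"
      by (intro paired_loss_bound ball_proj_norm t)
    then show ?thesis
      by (simp add: f_def ennreal_plus[symmetric] del: ennreal_plus)
  qed
  have "point_risk x t + point_risk x t = (\<integral>\<^sup>+ z. f z + f (- z) \<partial>(std_gauss :: (real^'n) measure))"
    by (subst nn_integral_add) (simp_all add: R[symmetric] R'[symmetric])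
  also have "\<dots> \<le> (\<integral>\<^sup>+ z. ennreal (2 * (norm z)\<^sup>2 + 2 * t\<^sup>2) \<partial>(std_gauss :: (real^'n) measure))"
    by (intro nn_integral_mono pair)
  also have "\<dots> = ennreal (2 * (real CARD('n) + t\<^sup>2))"
    by (subst std_gauss_affine_sq_norm) (auto simp: algebra_simps)
  finally show "point_risk x t + point_risk x t \<le> ennreal (2 * (real CARD('n) + t\<^sup>2))" .
qed

text \<open>The bound \<open>B + t\<^sup>2\<close> is approached by signals escaping to infinity: by Fatou's lemma,
  any upper bound for \<open>c r(0,t) + d r(x,t)\<close> uniform in \<open>x\<close> also bounds
  \<open>c r(0,t) + d (B + t\<^sup>2)\<close>.\<close>

lemma point_risk_escape_bound:
  fixes t c d :: real and S :: ennreal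
  assumes t: "t \<ge> 0" and c: "c \<ge> 0" and d: "d \<ge> 0"
    and S: "\<And>x::real^'n::finite. ennreal c * point_risk (0::real^'n) t + ennreal d * point_risk x t \<le> S"
  shows "ennreal c * point_risk (0::real^'n) t + ennreal d * ennreal (real CARD('n) + t\<^sup>2) \<le> S"
proof -
  define e :: "real^'n" where "e = axis undefined 1"
  have e: "norm e = 1" unfolding e_def by simp
  define loss where "loss x z = (norm (x - block_soft (x + z) t))\<^sup>2" for x z :: "real^'n"
  define mix where "mix x z = ennreal (c * loss 0 z + d * loss x z)" for x z
  have [measurable]: "loss x \<in> borel_measurable borel" for x
    unfolding loss_def block_soft_def by measurable
  have loss_nonneg: "loss x z \<ge> 0" for x z by (simp add: loss_def)
  have risk_loss: "point_risk x t = (\<integral>\<^sup>+ z. ennreal (loss x z) \<partial>std_gauss)" for x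
    unfolding point_risk_def loss_def ..
  have mix_integral: "(\<integral>\<^sup>+ z. mix x z \<partial>std_gauss) = ennreal c * point_risk (0::real^'n) t + ennreal d * point_risk x t"
    for x
    unfolding mix_def risk_loss
    by (rule nn_integral_nonneg_comb) (measurable, measurable, simp_all add: loss_nonneg c d)
  have loss_escape: "(\<lambda>n. loss (real n *\<^sub>R e) z) \<longlonglongrightarrow> (norm (t *\<^sub>R e - z))\<^sup>2" for z
    unfolding loss_def block_soft_loss_eq[OF t] by (intro tendsto_intros ball_proj_escape e t)
  have "ennreal c * point_risk (0::real^'n) t + ennreal d * ennreal (real CARD('n) + t\<^sup>2)
      = ennreal c * point_risk (0::real^'n) t + ennreal d * (\<integral>\<^sup>+ z. ennreal ((norm (t *\<^sub>R e - z))\<^sup>2) \<partial>std_gauss)"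
    using e t by (simp add: std_gauss_shift_sq_norm)
  also have "\<dots> = (\<integral>\<^sup>+ z. ennreal (c * loss 0 z + d * (norm (t *\<^sub>R e - z))\<^sup>2) \<partial>(std_gauss :: (real^'n) measure))"
    unfolding risk_loss
    by (rule nn_integral_nonneg_comb[symmetric]) (measurable, measurable, simp_all add: loss_nonneg c d)
  also have "\<dots> = (\<integral>\<^sup>+ z. liminf (\<lambda>n. mix (real n *\<^sub>R e) z) \<partial>std_gauss)"
    unfolding mix_def
    by (intro nn_integral_cong lim_imp_Liminf[symmetric] trivial_limit_sequentially tendsto_ennrealI
        tendsto_intros loss_escape)
  also have "\<dots> \<le> liminf (\<lambda>n. \<integral>\<^sup>+ z. mix (real n *\<^sub>R e) z \<partial>std_gauss)"
    by (intro nn_integral_liminf) (simp add: mix_def)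
  also have "\<dots> \<le> S"
    unfolding mix_integral
    by (intro order.trans[OF Liminf_le_Limsup] Limsup_bounded always_eventually allI S) simp
  finally show ?thesis .
qed

subsection \<open>The truncated chi-square moments \<open>chi_m1\<close> and \<open>chi_m2\<close>\<close>

definition excess :: "real \<Rightarrow> real \<Rightarrow> real" where
  "excess t x = (if x \<ge> t\<^sup>2 then sqrt x - t else 0)"

definition excess_sq :: "real \<Rightarrow> real \<Rightarrow> real" where
  "excess_sq t x = (if x \<ge> t\<^sup>2 then (sqrt x - t)\<^sup>2 else 0)"

lemma excess_measurable[measurable]: "excess t \<in> borel_measurable borel"
  unfolding excess_def by measurable

lemma excess_sq_measurable[measurable]: "excess_sq t \<in> borel_measurable borel"
  unfolding excess_sq_def by measurable

lemma chi_m1_eq: "chi_m1 k t = integral\<^sup>L (chi_square k) (excess t)"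
  unfolding chi_m1_def excess_def ..

lemma chi_m2_eq: "chi_m2 k t = integral\<^sup>L (chi_square k) (excess_sq t)"
  unfolding chi_m2_def excess_sq_def ..

lemma sqrt_ge_iff: "t \<ge> 0 \<Longrightarrow> x \<ge> 0 \<Longrightarrow> x \<ge> t\<^sup>2 \<longleftrightarrow> sqrt x \<ge> t"
  using real_sqrt_le_iff[of "t\<^sup>2" x] by simp

lemma excess_pos_part: "t \<ge> 0 \<Longrightarrow> x \<ge> 0 \<Longrightarrow> excess t x = max 0 (sqrt x - t)"
  unfolding excess_def by (auto simp: sqrt_ge_iff max_def)

lemma excess_sq_pos_part: "t \<ge> 0 \<Longrightarrow> x \<ge> 0 \<Longrightarrow> excess_sq t x = (max 0 (sqrt x - t))\<^sup>2"
  unfolding excess_sq_def by (auto simp: sqrt_ge_iff max_def)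

lemma excess_nonneg: "t \<ge> 0 \<Longrightarrow> excess t x \<ge> 0"
  unfolding excess_def using real_le_rsqrt[of t x] by auto

lemma excess_le: "excess t x \<le> 1 + excess_sq t x"
proof -
  have "s \<le> 1 + s\<^sup>2" for s :: real
    using sum_power2_ge_zero[of "s - 1/2" 0] by (simp add: power2_eq_square algebra_simps)
  then show ?thesis unfolding excess_def excess_sq_def by simp
qed

text \<open>The shrinkage of a Gaussian vector has squared length \<open>(\<parallel>z\<parallel> - t)\<^sub>+\<^sup>2\<close>, so the risk at the
  zero signal is the truncated second moment \<open>chi_m2\<close>.\<close>

lemma norm_block_soft_sq:
  fixes z :: "real^'n::finite" assumes t: "t \<ge> 0"
  shows "(norm (block_soft z t))\<^sup>2 = excess_sq t ((norm z)\<^sup>2)"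
proof -
  have "norm (block_soft z t) = max 0 (norm z - t)"
  proof (cases "norm z \<le> t")
    case True
    then show ?thesis by (simp add: block_soft_eq_residual[OF t] ball_proj_def)
  next
    case False
    then have pos: "norm z > 0" using t by linarith
    have c: "1 - t / norm z \<ge> 0" using False pos by (simp add: field_simps)
    have "block_soft z t = (1 - t / norm z) *\<^sub>R z"
      using False by (simp add: block_soft_eq_residual[OF t] ball_proj_def algebra_simps)
    then have "norm (block_soft z t) = (1 - t / norm z) * norm z" using c by simp
    also have "\<dots> = norm z - t" using pos by (simp add: field_simps)
    finally show ?thesis using False by simp
  qed
  then show ?thesis using t by (simp add: excess_sq_pos_part)
qed

lemma point_risk_zero:
  assumes t: "t \<ge> 0"
  shows "point_risk (0::real^'n::finite) t = (\<integral>\<^sup>+ x. ennreal (excess_sq t x) \<partial>chi_square (real CARD('n)))"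
proof -
  have "point_risk (0::real^'n) t
      = (\<integral>\<^sup>+ z. (\<lambda>x. ennreal (excess_sq t x)) ((norm z)\<^sup>2) \<partial>(std_gauss :: (real^'n) measure))"
    unfolding point_risk_def by (intro nn_integral_cong) (simp add: norm_block_soft_sq[OF t])
  also have "\<dots> = (\<integral>\<^sup>+ x. ennreal (excess_sq t x) \<partial>chi_square (real CARD('n)))"
    by (rule nn_integral_std_gauss_sq_norm) simp
  finally show ?thesis .
qed

lemma excess_sq_integrable:
  assumes t: "t \<ge> 0"
  shows "integrable (chi_square (real CARD('n::finite))) (excess_sq t)"
proof (rule integrableI_nonneg)
  show "excess_sq t \<in> borel_measurable (chi_square (real CARD('n)))" by measurable
  show "AE x in chi_square (real CARD('n)). 0 \<le> excess_sq t x" by (simp add: excess_sq_def)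
  have "point_risk (0::real^'n) t < \<infinity>"
    using point_risk_le[OF t, of "0::real^'n"] by (simp add: le_less_trans)
  then show "(\<integral>\<^sup>+ x. ennreal (excess_sq t x) \<partial>chi_square (real CARD('n))) < \<infinity>"
    by (simp add: point_risk_zero[OF t])
qed

lemma chi_m2_eq_point_risk_zero:
  assumes t: "t \<ge> 0"
  shows "ennreal (chi_m2 (real CARD('n::finite)) t) = point_risk (0::real^'n) t"
  unfolding chi_m2_eq point_risk_zero[OF t]
  by (rule nn_integral_eq_integral[OF excess_sq_integrable[OF t], symmetric]) (simp add: excess_sq_def)

lemma chi_m2_nonneg: "chi_m2 k t \<ge> 0"
  unfolding chi_m2_eq by (rule integral_nonneg_AE) (simp add: excess_sq_def)

lemma prob_space_chi_square: "k > 0 \<Longrightarrow> prob_space (chi_square k)"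
  by (rule prob_spaceI) (use chi_square_total[of k] in \<open>simp add: nn_integral_const\<close>)

lemma excess_integrable:
  assumes t: "t \<ge> 0"
  shows "integrable (chi_square (real CARD('n::finite))) (excess t)"
proof (rule Bochner_Integration.integrable_bound)
  interpret prob_space "chi_square (real CARD('n))" by (rule prob_space_chi_square) simp
  show "integrable (chi_square (real CARD('n))) (\<lambda>x. 1 + excess_sq t x)"
    by (intro Bochner_Integration.integrable_add integrable_const excess_sq_integrable t)
  show "AE x in chi_square (real CARD('n)). norm (excess t x) \<le> norm (1 + excess_sq t x)"
    using excess_nonneg[OF t] excess_le by (simp add: excess_sq_def)
qed simp

text \<open>\<open>chi_m1 B t > 0\<close>: the integrand is positive on \<open>(t\<^sup>2, t\<^sup>2 + 1)\<close>, where the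
  chi-square density is positive too.\<close>

lemma chi_m1_pos:
  assumes t: "t > 0"
  shows "chi_m1 (real CARD('n::finite)) t > 0"
proof -
  let ?M = "chi_square (real CARD('n))"
  have int: "integrable ?M (excess t)" using excess_integrable[of t] t by simp
  have nonneg: "AE x in ?M. 0 \<le> excess t x" using excess_nonneg[of t] t by simp
  have "chi_m1 (real CARD('n)) t \<noteq> 0"
  proof
    assume "chi_m1 (real CARD('n)) t = 0"
    then have "AE x in ?M. excess t x = 0"
      using integral_nonneg_eq_0_iff_AE[OF int nonneg] by (simp add: chi_m1_eq)
    then have "AE x in lborel. 0 < ennreal (chi_square_density (real CARD('n)) x) \<longrightarrow> excess t x = 0"
      unfolding chi_square_def by (subst (asm) AE_density) simp_all
    then have "AE x in lborel. x \<notin> {t\<^sup>2 <..< t\<^sup>2 + 1}"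
    proof (rule AE_mp, intro AE_I2 impI)
      fix x assume P: "0 < ennreal (chi_square_density (real CARD('n)) x) \<longrightarrow> excess t x = 0"
      show "x \<notin> {t\<^sup>2 <..< t\<^sup>2 + 1}"
      proof
        assume x: "x \<in> {t\<^sup>2 <..< t\<^sup>2 + 1}"
        then have "x > 0" using t by (smt (verit) zero_le_power2 greaterThanLessThan_iff)
        moreover have "t < sqrt x" using x by (intro real_less_rsqrt) simp
        ultimately show False using P x by (simp add: chi_square_density_def excess_def)
      qed
    qed
    then have "emeasure lborel {t\<^sup>2 <..< t\<^sup>2 + 1} = 0"
      by (subst (asm) AE_iff_measurable[where N="{t\<^sup>2 <..< t\<^sup>2 + 1}"]) auto
    then show False by simp
  qed
  moreover have "chi_m1 (real CARD('n)) t \<ge> 0"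
    unfolding chi_m1_eq using nonneg by (rule integral_nonneg_AE)
  ultimately show ?thesis by simp
qed

text \<open>Tangent-line inequality for the convex function \<open>u \<mapsto> (s - u)\<^sub>+\<^sup>2\<close>, whose derivative is
  \<open>-2 (s - u)\<^sub>+\<close>.\<close>

lemma sq_pos_part_tangent:
  fixes s t u :: real
  shows "(max 0 (s - t))\<^sup>2 \<ge> (max 0 (s - u))\<^sup>2 - 2 * (t - u) * max 0 (s - u)"
proof (cases "s \<le> u")
  case True then show ?thesis by simp
next
  case False
  then have e: "(max 0 (s - u))\<^sup>2 - 2 * (t - u) * max 0 (s - u) = (s - t)\<^sup>2 - (t - u)\<^sup>2"
    by (simp add: power2_eq_square algebra_simps)
  show ?thesis
  proof (cases "s \<ge> t")
    case True then show ?thesis unfolding e by simp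
  next
    case False
    then have "\<bar>s - t\<bar> \<le> \<bar>t - u\<bar>" using \<open>\<not> s \<le> u\<close> by arith
    then have "(s - t)\<^sup>2 \<le> (t - u)\<^sup>2" by (simp only: abs_le_square_iff)
    then show ?thesis using False unfolding e by simp
  qed
qed

lemma chi_m2_tangent:
  assumes t: "t \<ge> 0" and u: "u \<ge> 0"
  shows "chi_m2 (real CARD('n::finite)) u - 2 * (t - u) * chi_m1 (real CARD('n)) u
       \<le> chi_m2 (real CARD('n)) t"
proof -
  let ?M = "chi_square (real CARD('n))"
  have int_sq_u: "integrable ?M (excess_sq u)" by (rule excess_sq_integrable[OF u])
  have int_u: "integrable ?M (excess u)" by (rule excess_integrable[OF u])
  have int_sq_t: "integrable ?M (excess_sq t)" by (rule excess_sq_integrable[OF t])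
  have pointwise: "excess_sq u x - 2 * (t - u) * excess u x \<le> excess_sq t x" for x
  proof (cases "x \<ge> 0")
    case True
    then show ?thesis
      using sq_pos_part_tangent[where s="sqrt x" and t=t and u=u] t u
      by (simp add: excess_sq_pos_part excess_pos_part)
  next
    case False
    then have "\<not> x \<ge> t\<^sup>2" "\<not> x \<ge> u\<^sup>2" by (smt (verit) zero_le_power2)+
    then show ?thesis by (simp add: excess_def excess_sq_def)
  qed
  have "chi_m2 (real CARD('n)) u - 2 * (t - u) * chi_m1 (real CARD('n)) u
      = integral\<^sup>L ?M (\<lambda>x. excess_sq u x - 2 * (t - u) * excess u x)"
    unfolding chi_m2_eq chi_m1_eq using int_sq_u int_u by simp
  also have "\<dots> \<le> integral\<^sup>L ?M (excess_sq t)"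
    using int_sq_u int_u int_sq_t by (intro integral_mono pointwise) auto
  finally show ?thesis unfolding chi_m2_eq .
qed

subsection \<open>The worst-case risk over the sparse priors\<close>

definition two_point_prior :: "real \<Rightarrow> real^'n::finite \<Rightarrow> (real^'n) measure" where
  "two_point_prior e x = distr (measure_pmf (bernoulli_pmf e)) borel (\<lambda>b. if b then x else 0)"

lemma two_point_prior_sparse:
  assumes e: "0 \<le> e" "e \<le> 1"
  shows "two_point_prior e x \<in> sparse_priors e"
proof -
  have P: "prob_space (two_point_prior e x)" unfolding two_point_prior_def
    by (rule prob_space.prob_space_distr) (auto simp: prob_space_measure_pmf)
  have "measure (two_point_prior e x) {0}
      = measure_pmf.prob (bernoulli_pmf e) {b. (if b then x else 0) = 0}"
    unfolding two_point_prior_def by (subst measure_distr) (auto simp: vimage_def)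
  also have "\<dots> \<ge> measure_pmf.prob (bernoulli_pmf e) {False}"
    by (intro measure_pmf.finite_measure_mono) auto
  finally have "measure (two_point_prior e x) {0} \<ge> 1 - e"
    using e by (simp add: measure_pmf_single)
  then show ?thesis using P unfolding sparse_priors_def by (simp add: two_point_prior_def)
qed

lemma two_point_prior_risk:
  fixes x :: "real^'n::finite"
  assumes e: "0 \<le> e" "e \<le> 1"
  shows "soft_risk (two_point_prior e x) t
       = ennreal (1 - e) * point_risk (0::real^'n) t + ennreal e * point_risk x t"
proof -
  have "soft_risk (two_point_prior e x) t
      = (\<integral>\<^sup>+ b. point_risk (if b then x else 0) t \<partial>measure_pmf (bernoulli_pmf e))"
    unfolding soft_risk_eq_point_risk two_point_prior_def by (subst nn_integral_distr) auto
  also have "\<dots> = (\<Sum>b\<in>UNIV. point_risk (if b then x else 0) t * ennreal (pmf (bernoulli_pmf e) b))"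
    by (rule nn_integral_measure_pmf_support) auto
  also have "\<dots> = ennreal (1 - e) * point_risk (0::real^'n) t + ennreal e * point_risk x t"
    using e by (simp add: UNIV_bool ac_simps)
  finally show ?thesis .
qed

definition worst_risk :: "real \<Rightarrow> real \<Rightarrow> real \<Rightarrow> real" where
  "worst_risk B e t = (1 - e) * chi_m2 B t + e * (B + t\<^sup>2)"

lemma worst_risk_nonneg: "0 \<le> e \<Longrightarrow> e \<le> 1 \<Longrightarrow> B \<ge> 0 \<Longrightarrow> worst_risk B e t \<ge> 0"
  unfolding worst_risk_def using chi_m2_nonneg[of B t] by simp

text \<open>Upper bound: a sparse prior puts mass at least \<open>1 - e\<close> on the zero signal, whose risk
  \<open>chi_m2\<close> is below the bound \<open>B + t\<^sup>2\<close> valid at every other signal.\<close>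

lemma sparse_prior_risk_le:
  fixes \<nu> :: "(real^'n::finite) measure" and t e :: real
  assumes t: "t \<ge> 0" and nu: "\<nu> \<in> sparse_priors e"
  shows "soft_risk \<nu> t \<le> ennreal (worst_risk (real CARD('n)) e t)"
proof -
  define m2 where "m2 = chi_m2 (real CARD('n)) t"
  define C where "C = real CARD('n) + t\<^sup>2"
  have P: "prob_space \<nu>" and S: "sets \<nu> = sets borel" and p: "measure \<nu> {0} \<ge> 1 - e"
    using nu unfolding sparse_priors_def by auto
  interpret prob_space \<nu> by (rule P)
  have sp: "space \<nu> = UNIV" using sets_eq_imp_space_eq[OF S] by simp
  have [measurable_cong]: "sets \<nu> = sets borel" by (rule S)
  have r0: "point_risk (0::real^'n) t = ennreal m2"
    unfolding m2_def by (rule chi_m2_eq_point_risk_zero[OF t, symmetric])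
  have "ennreal m2 \<le> ennreal C"
    using point_risk_le[OF t, of "0::real^'n"] unfolding r0 C_def .
  then have m2C: "m2 \<le> C" unfolding C_def by (subst (asm) ennreal_le_iff) auto
  have "soft_risk \<nu> t \<le> (\<integral>\<^sup>+ x. ennreal m2 * indicator {0} x + ennreal C * indicator (- {0}) x \<partial>\<nu>)"
    unfolding soft_risk_eq_point_risk
  proof (intro nn_integral_mono)
    fix x :: "real^'n"
    show "point_risk x t \<le> ennreal m2 * indicator {0} x + ennreal C * indicator (- {0}) x"
      using point_risk_le[OF t, of x] r0 unfolding C_def by (cases "x = 0") auto
  qed
  also have "\<dots> = ennreal m2 * emeasure \<nu> {0} + ennreal C * emeasure \<nu> (- {0})"
    by (subst nn_integral_add) (auto simp: nn_integral_cmult_indicator)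
  also have "\<dots> = ennreal (m2 * measure \<nu> {0} + C * (1 - measure \<nu> {0}))"
  proof -
    have "emeasure \<nu> (- {0}) = ennreal (1 - measure \<nu> {0})"
      using prob_compl[of "{0}"] sp emeasure_eq_measure[of "- {0}"]
      by (simp add: Compl_eq_Diff_UNIV)
    then show ?thesis using chi_m2_nonneg m2C emeasure_eq_measure[of "{0}"] C_def m2_def
      by (simp add: ennreal_mult'[symmetric] ennreal_plus[symmetric] del: ennreal_plus)
  qed
  also have "\<dots> \<le> ennreal (worst_risk (real CARD('n)) e t)"
  proof (intro ennreal_leI)
    have "(C - m2) * (1 - e - measure \<nu> {0}) \<le> 0"
      using m2C p by (intro mult_nonneg_nonpos) auto
    then show "m2 * measure \<nu> {0} + C * (1 - measure \<nu> {0}) \<le> worst_risk (real CARD('n)) e t"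
      unfolding worst_risk_def m2_def[symmetric] C_def[symmetric] by (simp add: algebra_simps)
  qed
  finally show ?thesis .
qed

text \<open>Lower bound: two-point priors with the second point escaping to infinity.\<close>

lemma sparse_prior_risk_ge:
  fixes t e :: real
  assumes t: "t \<ge> 0" and e: "0 \<le> e" "e \<le> 1"
  shows "ennreal (worst_risk (real CARD('n::finite)) e t)
       \<le> (SUP \<nu>\<in>(sparse_priors e :: (real ^ 'n) measure set). soft_risk \<nu> t)"
proof -
  have "ennreal (1 - e) * point_risk (0::real^'n) t + ennreal e * ennreal (real CARD('n) + t\<^sup>2)
      \<le> (SUP \<nu>\<in>(sparse_priors e :: (real ^ 'n) measure set). soft_risk \<nu> t)"
  proof (rule point_risk_escape_bound[OF t])
    fix x :: "real^'n"
    show "ennreal (1 - e) * point_risk (0::real^'n) t + ennreal e * point_risk x t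
        \<le> (SUP \<nu>\<in>(sparse_priors e :: (real ^ 'n) measure set). soft_risk \<nu> t)"
      using two_point_prior_risk[OF e, of x t]
      by (intro SUP_upper2[OF two_point_prior_sparse[OF e, of x]]) simp
  qed (use e in auto)
  moreover have "ennreal (1 - e) * point_risk (0::real^'n) t + ennreal e * ennreal (real CARD('n) + t\<^sup>2)
      = ennreal (worst_risk (real CARD('n)) e t)"
    using e chi_m2_nonneg unfolding chi_m2_eq_point_risk_zero[OF t, symmetric] worst_risk_def
    by (simp add: ennreal_mult'[symmetric] ennreal_plus[symmetric] del: ennreal_plus)
  ultimately show ?thesis by simp
qed

lemma worst_case_risk:
  fixes t e :: real
  assumes t: "t \<ge> 0" and e: "0 \<le> e" "e \<le> 1"
  shows "(SUP \<nu>\<in>(sparse_priors e :: (real ^ 'n::finite) measure set). soft_risk \<nu> t)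
       = ennreal (worst_risk (real CARD('n)) e t)"
  using sparse_prior_risk_ge[OF t e] sparse_prior_risk_le[OF t]
  by (intro order.antisym SUP_least) auto

text \<open>If \<open>(1 - e) chi_m1 B \<tau> = e \<tau>\<close>, the tangent inequality for \<open>chi_m2\<close> makes \<open>\<tau>\<close> a
  minimiser of the worst-case risk: the linear terms cancel, leaving \<open>e (t - \<tau>)\<^sup>2 \<ge> 0\<close>.\<close>

lemma worst_risk_minimal:
  fixes \<tau> t e :: real
  assumes \<tau>: "\<tau> \<ge> 0" and t: "t \<ge> 0" and e: "0 \<le> e" "e \<le> 1"
    and balance: "(1 - e) * chi_m1 (real CARD('n::finite)) \<tau> = e * \<tau>"
  shows "worst_risk (real CARD('n)) e \<tau> \<le> worst_risk (real CARD('n)) e t"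
proof -
  let ?B = "real CARD('n)"
  have "(1 - e) * (chi_m2 ?B \<tau> - 2 * (t - \<tau>) * chi_m1 ?B \<tau>) \<le> (1 - e) * chi_m2 ?B t"
    using chi_m2_tangent[OF t \<tau>, where 'n='n] e by (intro mult_left_mono) auto
  then have "(1 - e) * chi_m2 ?B \<tau> - 2 * (t - \<tau>) * (e * \<tau>) \<le> (1 - e) * chi_m2 ?B t"
    unfolding balance[symmetric] by (simp add: algebra_simps)
  moreover have "e * (t - \<tau>)\<^sup>2 \<ge> 0" using e by simp
  ultimately show ?thesis unfolding worst_risk_def by (simp add: power2_eq_square algebra_simps)
qed

lemma worst_risk_closed_form:
  fixes B \<tau> :: real
  assumes B: "B > 0" and \<tau>: "\<tau> > 0" and m1: "chi_m1 B \<tau> > 0"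
  shows "worst_risk B (1 / (1 + h_fun B \<tau>)) \<tau> / B
       = (B + \<tau>\<^sup>2 + g_fun B \<tau>) / (B * (1 + h_fun B \<tau>))"
proof -
  have h: "h_fun B \<tau> > 0" unfolding h_fun_def using \<tau> m1 by simp
  have g: "g_fun B \<tau> = h_fun B \<tau> * chi_m2 B \<tau>" unfolding g_fun_def h_fun_def by simp
  have d: "1 + h_fun B \<tau> \<noteq> 0" using h by simp
  have e1: "1 - 1 / (1 + h_fun B \<tau>) = h_fun B \<tau> / (1 + h_fun B \<tau>)"
    using d by (simp add: field_simps)
  have combine: "a / c * m + 1 / c * x = (x + a * m) / c" if "c \<noteq> 0" for a c m x :: real
    using that by (simp add: field_simps)
  have "worst_risk B (1 / (1 + h_fun B \<tau>)) \<tau> = (B + \<tau>\<^sup>2 + g_fun B \<tau>) / (1 + h_fun B \<tau>)"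
    unfolding worst_risk_def g e1 combine[OF d] by (simp add: algebra_simps)
  then show ?thesis by (simp add: mult.commute)
qed

theorem mainTheorem3:
  fixes \<tau> :: real and \<epsilon> :: real
  defines "B \<equiv> real CARD('n::finite)"
  assumes "\<tau> > 0"
    and "\<epsilon> = 1 / (1 + h_fun B \<tau>)"
  shows "minimax_blocksoft TYPE('n) \<epsilon>
           = ennreal ((B + \<tau>\<^sup>2 + g_fun B \<tau>) / (B * (1 + h_fun B \<tau>)))
         \<and> (SUP \<nu>\<in>(sparse_priors \<epsilon> :: (real ^ 'n) measure set). soft_risk \<nu> \<tau>)
           = (INF t\<in>{0..}. SUP \<nu>\<in>(sparse_priors \<epsilon> :: (real ^ 'n) measure set). soft_risk \<nu> t)"
proof -
  note \<tau> = \<open>\<tau> > 0\<close>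
  have m1: "chi_m1 B \<tau> > 0" unfolding B_def by (rule chi_m1_pos[OF \<tau>])
  have h: "h_fun B \<tau> > 0" unfolding h_fun_def using \<tau> m1 by simp
  have e: "0 \<le> \<epsilon>" "\<epsilon> \<le> 1" using h assms(3) by simp_all
  have balance: "(1 - \<epsilon>) * chi_m1 B \<tau> = \<epsilon> * \<tau>"
    using h m1 unfolding assms(3) h_fun_def by (simp add: field_simps)
  define S where "S t = (SUP \<nu>\<in>(sparse_priors \<epsilon> :: (real ^ 'n) measure set). soft_risk \<nu> t)" for t
  have S: "S t = ennreal (worst_risk B \<epsilon> t)" if "t \<ge> 0" for t
    unfolding S_def B_def by (rule worst_case_risk[OF that e])
  have INF: "(INF t\<in>{0..}. S t) = S \<tau>"
  proof (rule antisym)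
    show "(INF t\<in>{0..}. S t) \<le> S \<tau>" using \<tau> by (intro INF_lower) simp
    show "S \<tau> \<le> (INF t\<in>{0..}. S t)"
      using worst_risk_minimal[OF _ _ e balance[unfolded B_def]] \<tau>
      by (intro INF_greatest) (simp add: S ennreal_leI B_def)
  qed
  have "minimax_blocksoft TYPE('n) \<epsilon> = ennreal (worst_risk B \<epsilon> \<tau>) / ennreal B"
    unfolding minimax_blocksoft_def S_def[symmetric] INF S[OF less_imp_le[OF \<tau>]] B_def ..
  also have "\<dots> = ennreal (worst_risk B \<epsilon> \<tau> / B)"
    using worst_risk_nonneg[OF e, of B \<tau>] by (simp add: divide_ennreal B_def)
  also have "\<dots> = ennreal ((B + \<tau>\<^sup>2 + g_fun B \<tau>) / (B * (1 + h_fun B \<tau>)))"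
    using worst_risk_closed_form[OF _ \<tau> m1] unfolding assms(3) B_def by simp
  finally show ?thesis using INF unfolding S_def by simp
qed


end
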